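(* For every $n\in\mathbb N$ there exists an $n$-saturated closed graph on the Cantor space $2^\omega$; that is, there is a graph $G$ with vertex set $V(G)=2^\omega$ whose edge relation $E(G)$ is a closed subset of $2^\omega\times 2^\omega$ and which is $n$-saturated.
   Context: A graph is a pair $G=(V(G),E(G))$ where $V(G)$ is a non-empty set and $E(G)\subseteq V(G)\times V(G)$ is a symmetric and reflexive relation (every vertex has a loop). A graph on a topological space $X$ is closed if its edge relation is a closed subset of $X^2$. For $A\subseteq V(G)$, a type over $A$ is a function $f\colon A\to\{0,1\}$; a vertex $v\in V(G)\setminus A$ realizes $f$ if for every $a\in A$, $(a,v)\in E(G)$ if and only if $f(a)=1$. The graph $G$ is $n$-saturated if for every $A\subseteq V(G)$ with $|A|<n$ and every type $f\in\{0,1\}^A$ there is a vertex $x\in V(G)\setminus A$ realizing $f$. The Cantor space $2^\omega=\{0,1\}^{\mathbb N}$ carries the product topology. *)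

theory Defs
  imports "HOL-Analysis.Analysis"
begin

definition cantor_topology :: "(nat \<Rightarrow> bool) topology" where
  "cantor_topology = product_topology (\<lambda>_. discrete_topology (UNIV :: bool set)) UNIV"

definition is_graph :: "'a set \<Rightarrow> ('a \<times> 'a) set \<Rightarrow> bool" where
  "is_graph V E \<longleftrightarrow> V \<noteq> {} \<and> E \<subseteq> V \<times> V \<and> (\<forall>v\<in>V. (v, v) \<in> E)
     \<and> (\<forall>u v. (u, v) \<in> E \<longrightarrow> (v, u) \<in> E)"

definition realizes :: "('a \<times> 'a) set \<Rightarrow> 'a set \<Rightarrow> ('a \<Rightarrow> bool) \<Rightarrow> 'a \<Rightarrow> bool" where
  "realizes E A f v \<longleftrightarrow> v \<notin> A \<and> (\<forall>a\<in>A. ((a, v) \<in> E \<longleftrightarrow> f a))"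

definition n_saturated :: "nat \<Rightarrow> 'a set \<Rightarrow> ('a \<times> 'a) set \<Rightarrow> bool" where
  "n_saturated n V E \<longleftrightarrow>
     (\<forall>A f. A \<subseteq> V \<and> finite A \<and> card A < n \<longrightarrow> (\<exists>v\<in>V. realizes E A f v))"

end

theory Submission
  imports Defs
begin

text \<open>For each stage \<open>i\<close> and each of \<open>r = 2n + 1\<close> colours, two bits of a point \<open>x\<close> of Cantor
space encode a digit in \<open>{0, 1, 2}\<close>, giving a vector \<open>digit x i\<close> in \<open>\<int>\<^sub>3\<^sup>r\<close>; the remaining
bits are indexed by finite binary strings \<open>s\<close>, and \<open>x\<close> contains the code of \<open>s\<close> if that bit is
set. A vector \<open>X\<close> beats \<open>Y\<close> if it arises from \<open>Y\<close> by adding 1 to a single coordinate. Two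
points are adjacent unless at some stage \<open>i\<close> one of them beats the other without containing
the code of the other's initial segment of length \<open>i\<close>. Each stage involves finitely many bits,
so the edge relation is closed, and it is reflexive because no vector beats itself.

To realize a type \<open>f\<close> over \<open>A\<close> with \<open>|A| < n\<close>, build \<open>v\<close> stage by stage: at stage \<open>i\<close> its digit
vector beats that of a target in \<open>A\<close> (cycling through \<open>A\<close> infinitely often) and is beaten by
no element of \<open>A\<close>; this is possible since a vector beats at most two of the \<open>r > 2|A|\<close> bumps of
a given vector. Let \<open>v\<close> contain exactly the codes of the initial segments of those \<open>a \<in> A\<close>
with \<open>f a\<close>. Then \<open>a\<close> and \<open>v\<close> are adjacent iff every initial segment of \<open>a\<close> at which \<open>v\<close> beats
\<open>a\<close> is coded in \<open>v\<close>; as long initial segments separate the elements of \<open>A\<close> and \<open>v\<close> beats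
\<open>a\<close> at arbitrarily late stages, this happens iff \<open>f a\<close>.\<close>

definition bump :: "(nat \<Rightarrow> nat) \<Rightarrow> nat \<Rightarrow> nat \<Rightarrow> nat" where
  "bump Y j = Y(j := Suc (Y j) mod 3)"

definition beats :: "nat \<Rightarrow> (nat \<Rightarrow> nat) \<Rightarrow> (nat \<Rightarrow> nat) \<Rightarrow> bool" where
  "beats r X Y \<longleftrightarrow> (\<exists>j<r. \<forall>c<r. X c = bump Y j c)"

lemma Suc_mod_3_neq [simp]: "Suc x mod 3 \<noteq> x" "Suc (Suc x mod 3) mod 3 \<noteq> x"
  by presburger+

lemma beats_irrefl: "\<not> beats r X X"
  unfolding beats_def bump_def by (metis Suc_mod_3_neq(1) fun_upd_same)

lemma beats_bump: "j < r \<Longrightarrow> beats r (bump Y j) Y"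
  unfolding beats_def by auto

lemma beats_cong:
  assumes "\<And>c. c < r \<Longrightarrow> X c = X' c" and "\<And>c. c < r \<Longrightarrow> Y c = Y' c"
  shows "beats r X Y \<longleftrightarrow> beats r X' Y'"
  using assms unfolding beats_def bump_def by auto

lemma card_beaten_bumps_le: "card {j. j < r \<and> beats r X (bump Y j)} \<le> 2"
proof (cases "{j. j < r \<and> beats r X (bump Y j)} = {}")
  case True
  then show ?thesis
    by (metis card.empty le0)
next
  case False
  then obtain j0 j1 where "j1 < r" and X: "\<forall>c<r. X c = bump (bump Y j0) j1 c"
    unfolding beats_def by blast
  have "{j. j < r \<and> beats r X (bump Y j)} \<subseteq> {j0, j1}"
  proof (intro subsetI CollectI, elim CollectE conjE)
    fix j assume "j < r" "beats r X (bump Y j)"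
    then obtain j' where "\<forall>c<r. X c = bump (bump Y j) j' c"
      unfolding beats_def by blast
    \<comment> \<open>at \<open>j\<close> the vector \<open>X\<close> exceeds \<open>Y\<close> by 1 or 2, but outside \<open>{j0, j1}\<close> it equals \<open>Y\<close>\<close>
    then have "X j \<noteq> Y j"
      using \<open>j < r\<close> by (auto simp: bump_def)
    with X \<open>j < r\<close> show "j \<in> {j0, j1}"
      by (auto simp: bump_def split: if_splits)
  qed
  then have "card {j. j < r \<and> beats r X (bump Y j)} \<le> card {j0, j1}"
    by (intro card_mono) auto
  also have "\<dots> \<le> 2"
    by (simp add: card_insert_if)
  finally show ?thesis .
qed

lemma exists_unbeaten_bump:
  assumes "finite W" and "2 * card W < r"
  shows "\<exists>j<r. \<forall>X\<in>W. \<not> beats r X (bump Y j)"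
proof -
  let ?beaten = "\<Union>X\<in>W. {j. j < r \<and> beats r X (bump Y j)}"
  have "card ?beaten \<le> (\<Sum>X\<in>W. card {j. j < r \<and> beats r X (bump Y j)})"
    using assms(1) by (rule card_UN_le)
  also have "\<dots> \<le> (\<Sum>X\<in>W. 2)"
    by (intro sum_mono card_beaten_bumps_le)
  also have "\<dots> < r"
    using assms(2) by simp
  finally have "card ?beaten < card {..<r}"
    by simp
  moreover have "finite ?beaten"
    by (rule finite_subset[of _ "{..<r}"]) auto
  ultimately have "\<not> {..<r} \<subseteq> ?beaten"
    using card_mono leD by blast
  then show ?thesis
    by auto
qed

lemma finite_prefixes_eventually_inj:
  fixes A :: "(nat \<Rightarrow> 'a) set"
  assumes "finite A"
  shows "\<exists>N. \<forall>i\<ge>N. inj_on (\<lambda>a. map a [0..<i]) A"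
proof -
  let ?D = "(\<lambda>(a, b). LEAST p. a p \<noteq> b p) ` {(a, b) \<in> A \<times> A. a \<noteq> b}"
  have "finite ?D"
    by (rule finite_imageI, rule finite_subset[of _ "A \<times> A"]) (use assms in auto)
  then obtain N where N: "\<forall>p\<in>?D. p < N"
    by (auto simp: finite_nat_set_iff_bounded)
  have "inj_on (\<lambda>a. map a [0..<i]) A" if "N \<le> i" for i
  proof (rule inj_onI, rule ccontr)
    fix a b assume "a \<in> A" "b \<in> A" "a \<noteq> b" and prefix: "map a [0..<i] = map b [0..<i]"
    define p where "p = (LEAST p. a p \<noteq> b p)"
    have "\<exists>p. a p \<noteq> b p"
      using \<open>a \<noteq> b\<close> by auto
    then have "a p \<noteq> b p"
      unfolding p_def by (rule LeastI_ex)
    moreover have "p \<in> ?D"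
      unfolding p_def using \<open>a \<in> A\<close> \<open>b \<in> A\<close> \<open>a \<noteq> b\<close> by (intro image_eqI[of _ _ "(a, b)"]) auto
    then have "p < i"
      using N \<open>N \<le> i\<close> by fastforce
    moreover have "map a [0..<i] ! p = map b [0..<i] ! p"
      by (simp only: prefix)
    ultimately show False
      by simp
  qed
  then show ?thesis
    by blast
qed

lemma exists_sequence_hitting_infinitely_often:
  assumes "finite A"
  shows "\<exists>g :: nat \<Rightarrow> 'a. \<forall>a\<in>A. \<forall>N. \<exists>i\<ge>N. g i = a"
proof -
  obtain as where as: "set as = A"
    using finite_list[OF assms] by blast
  have "\<exists>i\<ge>N. as ! (i mod length as) = a" if "a \<in> A" for a N
  proof -
    obtain k where "k < length as" "as ! k = a"
      using as \<open>a \<in> A\<close> by (metis in_set_conv_nth)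
    moreover have "N \<le> k + length as * N"
      using \<open>k < length as\<close> by (cases "length as") auto
    ultimately show ?thesis
      by (intro exI[of _ "k + length as * N"]) simp
  qed
  then show ?thesis
    by (intro exI[of _ "\<lambda>i. as ! (i mod length as)"]) blast
qed

lemma openin_cantor_cylinder:
  assumes "finite F"
  shows "openin cantor_topology {x. \<forall>i\<in>F. x i = y i}"
proof -
  have "openin cantor_topology {x. x i = y i}" for i
  proof -
    have "continuous_map cantor_topology (discrete_topology UNIV) (\<lambda>x. x i)"
      unfolding cantor_topology_def by (rule continuous_map_product_projection) simp
    from openin_continuous_map_preimage[OF this, of "{y i}"]
    show ?thesis
      by (simp add: cantor_topology_def)
  qed
  moreover have "{x. \<forall>i\<in>F. x i = y i} = (\<Inter>i\<in>F. {x. x i = y i}) \<inter> topspace cantor_topology"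
    by (auto simp: cantor_topology_def)
  ultimately show ?thesis
    using assms by (simp only:) blast
qed

lemma closedin_cantor_square_finite_dependence:
  assumes "finite F"
    and depends: "\<And>x y x' y'. (x, y) \<in> S \<Longrightarrow> (\<And>i. i \<in> F \<Longrightarrow> x' i = x i \<and> y' i = y i)
      \<Longrightarrow> (x', y') \<in> S"
  shows "closedin (prod_topology cantor_topology cantor_topology) S"
proof -
  have "openin (prod_topology cantor_topology cantor_topology) (- S)"
  proof (subst openin_subopen, intro ballI)
    fix p assume "p \<in> - S"
    obtain x y where p: "p = (x, y)"
      by fastforce
    let ?T = "{x'. \<forall>i\<in>F. x' i = x i} \<times> {y'. \<forall>i\<in>F. y' i = y i}"
    have "openin (prod_topology cantor_topology cantor_topology) ?T"
      using assms(1) by (simp add: openin_prod_Times_iff openin_cantor_cylinder)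
    moreover have "?T \<subseteq> - S"
      using depends \<open>p \<in> - S\<close> p by fastforce
    ultimately show "\<exists>T. openin (prod_topology cantor_topology cantor_topology) T \<and> p \<in> T \<and> T \<subseteq> - S"
      using p by blast
  qed
  then show ?thesis
    by (simp add: closedin_def topspace_prod_topology cantor_topology_def Compl_eq_Diff_UNIV)
qed

definition digit_pos :: "nat \<Rightarrow> nat \<Rightarrow> nat \<Rightarrow> nat" where
  "digit_pos i c t = 2 * prod_encode (i, prod_encode (c, t))"

definition code_pos :: "bool list \<Rightarrow> nat" where
  "code_pos s = 2 * to_nat s + 1"

definition digit :: "(nat \<Rightarrow> bool) \<Rightarrow> nat \<Rightarrow> nat \<Rightarrow> nat" where
  "digit x i c = of_bool (x (digit_pos i c 0)) + of_bool (x (digit_pos i c 1))"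

definition stage_adjacent :: "nat \<Rightarrow> nat \<Rightarrow> (nat \<Rightarrow> bool) \<Rightarrow> (nat \<Rightarrow> bool) \<Rightarrow> bool" where
  "stage_adjacent r i x y \<longleftrightarrow>
     (beats r (digit x i) (digit y i) \<longrightarrow> x (code_pos (map y [0..<i]))) \<and>
     (beats r (digit y i) (digit x i) \<longrightarrow> y (code_pos (map x [0..<i])))"

definition saturating_graph :: "nat \<Rightarrow> ((nat \<Rightarrow> bool) \<times> (nat \<Rightarrow> bool)) set" where
  "saturating_graph r = {(x, y). \<forall>i. stage_adjacent r i x y}"

lemma digit_le_2: "digit x i c \<le> 2"
  unfolding digit_def by simp

lemma obtain_point_with_digits_and_codes:
  assumes "\<And>i c. U i c \<le> 2"
  obtains v where "\<And>i. digit v i = U i" and "\<And>s. v (code_pos s) \<longleftrightarrow> P s"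
proof
  define v where "v p = (if even p
      then (case prod_decode (p div 2) of (i, ct) \<Rightarrow> case prod_decode ct of (c, t) \<Rightarrow> t < U i c)
      else P (from_nat (p div 2)))" for p
  show "digit v i = U i" for i
  proof
    fix c
    have "U i c = 0 \<or> U i c = 1 \<or> U i c = 2"
      using assms[of i c] by auto
    then show "digit v i c = U i c"
      by (auto simp: digit_def digit_pos_def v_def)
  qed
  show "v (code_pos s) \<longleftrightarrow> P s" for s
    by (simp add: code_pos_def v_def)
qed

lemma is_graph_saturating_graph: "is_graph UNIV (saturating_graph r)"
  unfolding is_graph_def saturating_graph_def stage_adjacent_def by (auto simp: beats_irrefl)

lemma closedin_stage_adjacent:
  "closedin (prod_topology cantor_topology cantor_topology) {(x, y). stage_adjacent r i x y}"
proof (rule closedin_cantor_square_finite_dependence)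
  let ?F = "(\<lambda>(c, t). digit_pos i c t) ` ({..<r} \<times> {..<2}) \<union> {..<i}
    \<union> code_pos ` {s. length s = i}"
  show "finite ?F"
    using finite_lists_length_eq[of "UNIV :: bool set" i] by simp
  fix x y x' y' :: "nat \<Rightarrow> bool"
  assume "(x, y) \<in> {(x, y). stage_adjacent r i x y}"
    and agree: "\<And>k. k \<in> ?F \<Longrightarrow> x' k = x k \<and> y' k = y k"
  have digits: "digit x' i c = digit x i c \<and> digit y' i c = digit y i c" if "c < r" for c
    using agree[of "digit_pos i c 0"] agree[of "digit_pos i c 1"] that
    unfolding digit_def by force
  have beats_eq: "beats r (digit x' i) (digit y' i) \<longleftrightarrow> beats r (digit x i) (digit y i)"
    "beats r (digit y' i) (digit x' i) \<longleftrightarrow> beats r (digit y i) (digit x i)"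
    by (intro beats_cong; simp add: digits)+
  have prefixes_eq: "map x' [0..<i] = map x [0..<i]" "map y' [0..<i] = map y [0..<i]"
    using agree by auto
  have codes_eq: "x' (code_pos (map y [0..<i])) = x (code_pos (map y [0..<i]))"
    "y' (code_pos (map x [0..<i])) = y (code_pos (map x [0..<i]))"
    using agree by auto
  show "(x', y') \<in> {(x, y). stage_adjacent r i x y}"
    using \<open>(x, y) \<in> _\<close> unfolding stage_adjacent_def mem_Collect_eq case_prod_conv
    by (simp only: beats_eq prefixes_eq codes_eq)
qed

lemma closedin_saturating_graph:
  "closedin (prod_topology cantor_topology cantor_topology) (saturating_graph r)"
proof -
  have "saturating_graph r = (\<Inter>i. {(x, y). stage_adjacent r i x y})"
    unfolding saturating_graph_def by auto
  then show ?thesis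
    using closedin_stage_adjacent by auto
qed

lemma realizes_saturating_graphI:
  assumes "finite A"
    and unbeaten: "\<And>a i. a \<in> A \<Longrightarrow> \<not> beats r (digit a i) (digit v i)"
    and beats_late: "\<And>a N. a \<in> A \<Longrightarrow> \<exists>i\<ge>N. beats r (digit v i) (digit a i)"
    and codes: "\<And>s. v (code_pos s) \<longleftrightarrow> (\<exists>b\<in>A. \<exists>i. f b \<and> s = map b [0..<i])"
  shows "realizes (saturating_graph r) A f v"
  unfolding realizes_def
proof (intro conjI ballI)
  show "v \<notin> A"
    using beats_late beats_irrefl by blast
  fix a assume "a \<in> A"
  have adjacent_iff: "(a, v) \<in> saturating_graph r \<longleftrightarrow>
      (\<forall>i. beats r (digit v i) (digit a i) \<longrightarrow> v (code_pos (map a [0..<i])))"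
    unfolding saturating_graph_def stage_adjacent_def using unbeaten[OF \<open>a \<in> A\<close>] by auto
  show "(a, v) \<in> saturating_graph r \<longleftrightarrow> f a"
  proof
    assume "(a, v) \<in> saturating_graph r"
    obtain N where N: "\<And>i. N \<le> i \<Longrightarrow> inj_on (\<lambda>a. map a [0..<i]) A"
      using finite_prefixes_eventually_inj[OF assms(1)] by blast
    obtain i where "N \<le> i" "beats r (digit v i) (digit a i)"
      using beats_late[OF \<open>a \<in> A\<close>] by blast
    then obtain b i' where "b \<in> A" "f b" "map a [0..<i] = map b [0..<i']"
      using \<open>(a, v) \<in> _\<close> adjacent_iff codes by blast
    moreover from this have "i' = i"
      by (metis diff_zero length_map length_upt)
    ultimately show "f a"
      using N[OF \<open>N \<le> i\<close>] \<open>a \<in> A\<close> by (metis inj_on_def)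
  next
    assume "f a"
    then show "(a, v) \<in> saturating_graph r"
      using adjacent_iff codes \<open>a \<in> A\<close> by blast
  qed
qed

lemma ex_realizes_saturating_graph:
  assumes "finite A" and "2 * card A < r"
  shows "\<exists>v. realizes (saturating_graph r) A f v"
proof -
  obtain g :: "nat \<Rightarrow> nat \<Rightarrow> bool" where g: "\<And>a N. a \<in> A \<Longrightarrow> \<exists>i\<ge>N. g i = a"
    using exists_sequence_hitting_infinitely_often[OF assms(1)] by blast
  have "\<exists>j<r. \<forall>a\<in>A. \<not> beats r (digit a i) (bump (digit (g i) i) j)" for i
  proof -
    have "2 * card ((\<lambda>a. digit a i) ` A) < r"
      using assms(2) card_image_le[OF assms(1), of "\<lambda>a. digit a i"] by linarith
    then show ?thesis
      using exists_unbeaten_bump[of "(\<lambda>a. digit a i) ` A"] assms(1) by auto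
  qed
  then obtain J where J: "\<And>i. J i < r"
    "\<And>i a. a \<in> A \<Longrightarrow> \<not> beats r (digit a i) (bump (digit (g i) i) (J i))"
    by metis
  define U where "U i = bump (digit (g i) i) (J i)" for i
  have U_le: "U i c \<le> 2" for i c
    unfolding U_def bump_def using digit_le_2 by auto
  obtain v where digits: "\<And>i. digit v i = U i"
    and codes: "\<And>s. v (code_pos s) \<longleftrightarrow> (\<exists>b\<in>A. \<exists>i. f b \<and> s = map b [0..<i])"
    using obtain_point_with_digits_and_codes[of U "\<lambda>s. \<exists>b\<in>A. \<exists>i. f b \<and> s = map b [0..<i]", OF U_le]
    by blast
  have "realizes (saturating_graph r) A f v"
  proof (rule realizes_saturating_graphI[OF assms(1)])
    show "\<not> beats r (digit a i) (digit v i)" if "a \<in> A" for a i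
      using J(2)[OF that] by (simp add: digits U_def)
    show "\<exists>i\<ge>N. beats r (digit v i) (digit a i)" if a: "a \<in> A" for a N
    proof -
      obtain i where "N \<le> i" "g i = a"
        using g[OF a] by blast
      moreover have "beats r (digit v i) (digit (g i) i)"
        unfolding digits U_def by (rule beats_bump[OF J(1)])
      ultimately show ?thesis
        by blast
    qed
  qed (fact codes)
  then show ?thesis
    by blast
qed

theorem theorem1:
  fixes n :: nat
  shows "\<exists>E :: ((nat \<Rightarrow> bool) \<times> (nat \<Rightarrow> bool)) set.
           is_graph UNIV E
         \<and> closedin (prod_topology cantor_topology cantor_topology) E
         \<and> n_saturated n UNIV E"
proof (intro exI conjI)
  show "is_graph UNIV (saturating_graph (2 * n + 1))"
    by (rule is_graph_saturating_graph)
  show "closedin (prod_topology cantor_topology cantor_topology) (saturating_graph (2 * n + 1))"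
    by (rule closedin_saturating_graph)
  show "n_saturated n UNIV (saturating_graph (2 * n + 1))"
    unfolding n_saturated_def using ex_realizes_saturating_graph by simp
qed

end
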